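(* Let $p\in(0,1)$, $a>a_*:=p^p(1-p)^{1-p}$, and let $\gamma_a:\mathbb{R}\to\mathbb{S}^2$ be a $p$-elastic curve with non-constant curvature $\kappa$ satisfying the first integral with constant $a$ (so $\kappa$ is periodic with some minimal period $\varrho=\varrho(a)>0$). Then $\gamma_a$ is a closed curve if and only if $$\Lambda_p(a):=(1-p)\sqrt{a}\int_0^{\varrho}\frac{\kappa^{2-p}}{a\,\kappa^{2(1-p)}-p^2}\,ds=2\pi q$$ for some rational number $q$.
   Context: $\mathbb{S}^2$ is the unit sphere in $\mathbb{R}^3$. For an immersed arc-length parametrized curve $\gamma$ in $\mathbb{S}^2$, $T=\gamma'$, $N$ is the rotation of $T$ by $+\pi/2$ in the tangent plane, and the geodesic curvature $\kappa$ is defined by $\nabla_T T=\kappa N$. For $p\in(0,1)$, $\mathbf{\Theta}_p(\gamma)=\int_\gamma\kappa^p\,ds$ acts on convex curves ($\kappa>0$), and a $p$-elastic curve is a convex curve whose curvature satisfies $p\,(\kappa^{p-1})''+(p-1)\kappa^{p+1}+p\,\kappa^{p-1}=0$. A $p$-elastic curve with non-constant curvature satisfies, for a constant $a$, the first integral $p^2(p-1)^2\kappa^{2(p-2)}(\kappa')^2+(p-1)^2\kappa^{2p}+p^2\kappa^{2(p-1)}=a$; for $p\in(0,1)$ non-constant solutions require $a>a_*$, and such curves are defined on all of $\mathbb{R}$ with periodic curvature. *)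

theory Defs
  imports "HOL-Analysis.Analysis"
begin

definition tangent :: "(real \<Rightarrow> real^3) \<Rightarrow> real \<Rightarrow> real^3" where
  "tangent \<gamma> s = vector_derivative \<gamma> (at s)"

text \<open>N = rotation of T by +pi/2 in the tangent plane at gamma(s), i.e. N = gamma x T.
  nabla_T T is the tangential part of T'; kappa = <nabla_T T, N> = <T', gamma x T>.\<close>

definition normal :: "(real \<Rightarrow> real^3) \<Rightarrow> real \<Rightarrow> real^3" where
  "normal \<gamma> s = cross3 (\<gamma> s) (tangent \<gamma> s)"

definition cov_accel :: "(real \<Rightarrow> real^3) \<Rightarrow> real \<Rightarrow> real^3" where
  "cov_accel \<gamma> s = vector_derivative (tangent \<gamma>) (at s)
      - (vector_derivative (tangent \<gamma>) (at s) \<bullet> \<gamma> s) *\<^sub>R \<gamma> s"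

definition geod_curv :: "(real \<Rightarrow> real^3) \<Rightarrow> real \<Rightarrow> real" where
  "geod_curv \<gamma> s = cov_accel \<gamma> s \<bullet> normal \<gamma> s"

definition arclength_sphere_curve :: "(real \<Rightarrow> real^3) \<Rightarrow> bool" where
  "arclength_sphere_curve \<gamma> \<longleftrightarrow>
     (\<forall>s. norm (\<gamma> s) = 1) \<and> (\<forall>s. \<gamma> differentiable (at s)) \<and>
     (\<forall>s. norm (tangent \<gamma> s) = 1) \<and> (\<forall>s. tangent \<gamma> differentiable (at s))"

definition p_elastic :: "real \<Rightarrow> (real \<Rightarrow> real^3) \<Rightarrow> bool" where
  "p_elastic p \<gamma> \<longleftrightarrow> arclength_sphere_curve \<gamma> \<and>
     (\<forall>s. geod_curv \<gamma> s > 0) \<and>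
     (\<forall>s. (\<lambda>t. geod_curv \<gamma> t powr (p - 1)) differentiable (at s)) \<and>
     (\<forall>s. deriv (\<lambda>t. geod_curv \<gamma> t powr (p - 1)) differentiable (at s)) \<and>
     (\<forall>s. p * deriv (deriv (\<lambda>t. geod_curv \<gamma> t powr (p - 1))) s
          + (p - 1) * geod_curv \<gamma> s powr (p + 1) + p * geod_curv \<gamma> s powr (p - 1) = 0)"

definition closed_curve :: "(real \<Rightarrow> real^3) \<Rightarrow> bool" where
  "closed_curve \<gamma> \<longleftrightarrow> (\<exists>L>0. \<forall>s. \<gamma> (s + L) = \<gamma> s)"

definition minimal_period :: "(real \<Rightarrow> real) \<Rightarrow> real \<Rightarrow> bool" where
  "minimal_period f \<rho> \<longleftrightarrow> \<rho> > 0 \<and> (\<forall>s. f (s + \<rho>) = f s) \<and>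
     (\<forall>t. 0 < t \<and> t < \<rho> \<longrightarrow> \<not> (\<forall>s. f (s + t) = f s))"

definition Lambda_p :: "real \<Rightarrow> real \<Rightarrow> (real \<Rightarrow> real) \<Rightarrow> real \<Rightarrow> real" where
  "Lambda_p p a \<kappa> \<rho> = (1 - p) * sqrt a *
     integral {0..\<rho>} (\<lambda>s. \<kappa> s powr (2 - p) / (a * \<kappa> s powr (2 * (1 - p)) - p\<^sup>2))"

end

theory Submission
  imports Defs
begin

text \<open>Along a p-elastic curve the vector
  \<open>J = p \<kappa>\<^sup>p\<^sup>-\<^sup>1 \<gamma> + p (\<kappa>\<^sup>p\<^sup>-\<^sup>1)' T + (1 - p) \<kappa>\<^sup>p N\<close>
  is constant (it is the conserved vector that the rotation invariance of \<open>\<Theta>\<^sub>p\<close> attaches to its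
  critical points), and
  \<open>|J|\<^sup>2 = a\<close> is exactly the first integral.  Writing \<open>\<gamma>\<close> in cylindrical coordinates about the
  axis \<open>J\<close>, height and radius are functions of \<open>\<kappa>\<close> alone, while the polar angle \<open>\<theta>\<close> has the
  integrand of \<open>\<Lambda>\<^sub>p(a)\<close> as its derivative.  Hence shifting the parameter by a period \<open>n \<rho>\<close> of
  \<open>\<kappa>\<close> rotates the curve about the axis by \<open>n \<Lambda>\<^sub>p(a)\<close>, and every period of \<open>\<gamma>\<close> is such an \<open>n \<rho>\<close>.
  So \<open>\<gamma>\<close> closes up iff \<open>n \<Lambda>\<^sub>p(a) \<in> 2\<pi>\<int>\<close> for some \<open>n > 0\<close>.  The hypotheses \<open>a > a\<^sub>*\<close> and
  non-constancy of \<open>\<kappa>\<close> only ensure that such curves exist; the equivalence does not need them.\<close>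

unbundle cross3_syntax

lemma orthonormal_frame_expansion:
  fixes g t v :: "real^3"
  assumes g: "norm g = 1" and t: "norm t = 1" and gt: "g \<bullet> t = 0"
  shows "v = (v \<bullet> g) *\<^sub>R g + (v \<bullet> t) *\<^sub>R t + (v \<bullet> (g \<times> t)) *\<^sub>R (g \<times> t)"
proof -
  define n where "n = g \<times> t"
  have gg: "g \<bullet> g = 1" using g by (simp add: dot_square_norm)
  have tt: "t \<bullet> t = 1" using t by (simp add: dot_square_norm)
  have nn: "n \<bullet> n = 1"
    using norm_cross_dot[of g t] g t gt by (simp add: n_def dot_square_norm power2_eq_square)
  have ng: "n \<times> g = t" unfolding n_def
    using Lagrange[of g g t] gg gt cross_skew[of "g \<times> t" g] by simp
  have nt: "n \<times> t = - g" unfolding n_def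
    using Lagrange[of t g t] tt gt cross_skew[of "g \<times> t" t] by (simp add: inner_commute)
  have "v \<times> n = (v \<bullet> t) *\<^sub>R g - (v \<bullet> g) *\<^sub>R t"
    unfolding n_def using Lagrange[of v g t] by simp
  then have "n \<times> (v \<times> n) = (v \<bullet> t) *\<^sub>R t + (v \<bullet> g) *\<^sub>R g"
    by (simp add: Cross3.right_diff_distrib cross_mult_right ng nt)
  moreover have "n \<times> (v \<times> n) = v - (n \<bullet> v) *\<^sub>R n"
    using Lagrange[of n v n] nn by simp
  ultimately show ?thesis unfolding n_def[symmetric] by (simp add: inner_commute algebra_simps)
qed

lemma triple_product_cyclic: "(a::real^3) \<bullet> (b \<times> c) = b \<bullet> (c \<times> a)"
  by (simp add: cross3_simps)

lemma bounded_bilinear_cross3: "bounded_bilinear cross3"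
  using bilinear_cross bilinear_conv_bounded_bilinear by blast

lemma has_vector_derivative_zero_imp_constant:
  fixes h :: "real \<Rightarrow> 'a::real_normed_vector"
  assumes "\<And>s. (h has_vector_derivative 0) (at s)"
  shows "h s = h t"
proof -
  obtain c where "\<And>s. s \<in> UNIV \<Longrightarrow> h s = c"
    using has_vector_derivative_zero_constant[OF convex_UNIV, of h] assms by metis
  then show ?thesis by simp
qed

lemma inner_constant_derivative:
  fixes f g :: "real \<Rightarrow> 'a::real_inner"
  assumes "\<And>s. f s \<bullet> g s = c"
    and "(f has_vector_derivative f') (at x)" "(g has_vector_derivative g') (at x)"
  shows "f x \<bullet> g' + f' \<bullet> g x = 0"
proof -
  have "((\<lambda>s. f s \<bullet> g s) has_vector_derivative (f x \<bullet> g' + f' \<bullet> g x)) (at x)"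
    using bounded_bilinear.has_vector_derivative[OF bounded_bilinear_inner assms(2,3)] .
  moreover have "((\<lambda>s. f s \<bullet> g s) has_vector_derivative 0) (at x)"
    using assms(1) by simp
  ultimately show ?thesis using vector_derivative_unique_at by blast
qed

lemma vector_derivative_periodic:
  fixes f :: "real \<Rightarrow> 'a::real_normed_vector"
  assumes per: "\<And>s. f (s + L) = f s" and diff: "f differentiable (at (s + L))"
  shows "vector_derivative f (at (s + L)) = vector_derivative f (at s)"
proof -
  have "((\<lambda>t. t + L) has_vector_derivative 1) (at s)"
    by (auto intro!: derivative_eq_intros)
  from vector_diff_chain_at[OF this] diff
  have "((\<lambda>t. f (t + L)) has_vector_derivative vector_derivative f (at (s + L))) (at s)"
    by (simp add: o_def vector_derivative_works)
  moreover have "(\<lambda>t. f (t + L)) = f" using per by simp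
  ultimately show ?thesis using vector_derivative_at by metis
qed

lemma differentiable_if_powr_differentiable:
  fixes k :: "real \<Rightarrow> real"
  assumes pos: "\<And>t. k t > 0" and "m \<noteq> 0" and "(\<lambda>t. k t powr m) differentiable (at s)"
  shows "k differentiable (at s)"
proof -
  obtain d where d: "((\<lambda>t. k t powr m) has_real_derivative d) (at s)"
    using assms(3) real_differentiable_def by blast
  have "k s powr m > 0" using pos[of s] by simp
  from DERIV_fun_powr[OF d this, of "1 / m"]
  have "(\<lambda>t. (k t powr m) powr (1 / m)) differentiable (at s)"
    using real_differentiable_def by blast
  moreover have "(\<lambda>t. (k t powr m) powr (1 / m)) = k"
    using pos \<open>m \<noteq> 0\<close> by (simp add: powr_powr less_imp_le)
  ultimately show ?thesis by simp
qed

lemma rotation_from_derivatives: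
  fixes u v :: "real \<Rightarrow> 'a::real_normed_vector"
  assumes u: "\<And>s. (u has_vector_derivative f s *\<^sub>R v s) (at s)"
    and v: "\<And>s. (v has_vector_derivative - f s *\<^sub>R u s) (at s)"
    and \<theta>: "\<And>s. (\<theta> has_real_derivative f s) (at s)" and \<theta>0: "\<theta> 0 = 0"
  shows "u s = cos (\<theta> s) *\<^sub>R u 0 + sin (\<theta> s) *\<^sub>R v 0"
proof -
  have cos: "((\<lambda>s. cos (\<theta> s)) has_real_derivative - sin (\<theta> s) * f s) (at s)" for s
    by (auto intro!: derivative_eq_intros \<theta>)
  have sin: "((\<lambda>s. sin (\<theta> s)) has_real_derivative cos (\<theta> s) * f s) (at s)" for s
    by (auto intro!: derivative_eq_intros \<theta>)
  define F where "F s = cos (\<theta> s) *\<^sub>R u s - sin (\<theta> s) *\<^sub>R v s" for s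
  define G where "G s = sin (\<theta> s) *\<^sub>R u s + cos (\<theta> s) *\<^sub>R v s" for s
  have "(F has_vector_derivative
      (cos (\<theta> s) *\<^sub>R (f s *\<^sub>R v s) + (- sin (\<theta> s) * f s) *\<^sub>R u s)
      - (sin (\<theta> s) *\<^sub>R (- f s *\<^sub>R u s) + (cos (\<theta> s) * f s) *\<^sub>R v s)) (at s)" for s
    unfolding F_def[abs_def]
    by (intro has_vector_derivative_diff has_vector_derivative_scaleR cos sin u v)
  then have "(F has_vector_derivative 0) (at s)" for s
    by (simp add: scaleR_diff_left)
  then have F: "F s = u 0"
    using has_vector_derivative_zero_imp_constant[of F s 0] \<theta>0 by (simp add: F_def)
  have "(G has_vector_derivative
      (sin (\<theta> s) *\<^sub>R (f s *\<^sub>R v s) + (cos (\<theta> s) * f s) *\<^sub>R u s)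
      + (cos (\<theta> s) *\<^sub>R (- f s *\<^sub>R u s) + (- sin (\<theta> s) * f s) *\<^sub>R v s)) (at s)" for s
    unfolding G_def[abs_def]
    by (intro has_vector_derivative_add has_vector_derivative_scaleR cos sin u v)
  then have "(G has_vector_derivative 0) (at s)" for s
    by (simp add: mult.commute)
  then have G: "G s = v 0"
    using has_vector_derivative_zero_imp_constant[of G s 0] \<theta>0 by (simp add: G_def)
  have "cos (\<theta> s) *\<^sub>R F s + sin (\<theta> s) *\<^sub>R G s
      = (cos (\<theta> s) * cos (\<theta> s)) *\<^sub>R u s + (sin (\<theta> s) * sin (\<theta> s)) *\<^sub>R u s"
    unfolding F_def G_def by (simp add: algebra_simps)
  also have "\<dots> = (cos (\<theta> s) * cos (\<theta> s) + sin (\<theta> s) * sin (\<theta> s)) *\<^sub>R u s"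
    by (simp only: scaleR_add_left)
  also have "\<dots> = u s" by (simp flip: power2_eq_square)
  finally show ?thesis using F G by simp
qed

lemma antiderivative_vanishing_at_0:
  fixes f :: "real \<Rightarrow> real"
  assumes "\<And>s. isCont f s"
  obtains \<theta> where "\<theta> 0 = 0" "\<And>s. (\<theta> has_real_derivative f s) (at s)"
proof -
  obtain F where F: "\<And>s. (F has_vector_derivative f s) (at s)"
    using einterval_antiderivative[of "-\<infinity>" "\<infinity>" f] assms by auto
  have "((\<lambda>s. F s - F 0) has_real_derivative f s) (at s)" for s
    using F[of s] by (auto simp: has_real_derivative_iff_has_vector_derivative intro!: derivative_eq_intros)
  then show ?thesis using that[of "\<lambda>s. F s - F 0"] by simp
qed

lemma antiderivative_shift_periodic:
  fixes \<theta> f :: "real \<Rightarrow> real"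
  assumes \<theta>: "\<And>s. (\<theta> has_real_derivative f s) (at s)" and \<theta>0: "\<theta> 0 = 0"
    and per: "\<And>s. f (s + L) = f s"
  shows "\<theta> (s + real n * L) = \<theta> s + real n * \<theta> L"
proof (induction n arbitrary: s)
  case 0
  then show ?case by simp
next
  case (Suc n)
  have "((\<lambda>s. \<theta> (s + L) - \<theta> s) has_real_derivative 0) (at t)" for t
    using DERIV_diff[OF iffD1[OF DERIV_shift \<theta>[of "t + L"]] \<theta>[of t]] per by simp
  then have shift: "\<theta> (t + L) = \<theta> t + \<theta> L" for t
    using DERIV_isconst_all[of "\<lambda>s. \<theta> (s + L) - \<theta> s" t 0] \<theta>0 by auto
  have "\<theta> (s + real (Suc n) * L) = \<theta> ((s + real n * L) + L)" by (simp add: algebra_simps)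
  also have "\<dots> = \<theta> (s + real n * L) + \<theta> L" by (rule shift)
  also have "\<dots> = \<theta> s + real (Suc n) * \<theta> L" using Suc.IH by (simp add: algebra_simps)
  finally show ?case .
qed

lemma rational_multiple_of_2pi_iff:
  "(\<exists>q\<in>\<rat>. t = 2 * pi * q) \<longleftrightarrow> (\<exists>n::nat. 0 < n \<and> (\<exists>k::int. real n * t = 2 * pi * k))"
proof
  assume "\<exists>q\<in>\<rat>. t = 2 * pi * q"
  then obtain k b :: int where "b > 0" "t = 2 * pi * (of_int k / of_int b)"
    using Rats_cases' by metis
  then show "\<exists>n::nat. 0 < n \<and> (\<exists>k::int. real n * t = 2 * pi * k)"
    by (intro exI[of _ "nat b"] conjI exI[of _ k]) auto
next
  assume "\<exists>n::nat. 0 < n \<and> (\<exists>k::int. real n * t = 2 * pi * k)"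
  then obtain n :: nat and k :: int where "0 < n" "real n * t = 2 * pi * k" by blast
  then have "t = 2 * pi * (of_int k / of_nat n)" by (simp add: field_simps)
  then show "\<exists>q\<in>\<rat>. t = 2 * pi * q" by (metis Rats_divide Rats_of_int Rats_of_nat)
qed

lemma minimal_period_multiple:
  assumes "minimal_period g \<rho>"
  shows "g (s + real n * \<rho>) = g s"
proof (induction n arbitrary: s)
  case 0
  then show ?case by simp
next
  case (Suc n)
  have "g (s + real (Suc n) * \<rho>) = g ((s + real n * \<rho>) + \<rho>)" by (simp add: algebra_simps)
  also have "\<dots> = g (s + real n * \<rho>)" using assms unfolding minimal_period_def by blast
  finally show ?case using Suc by simp
qed

lemma period_is_multiple_of_minimal_period:
  assumes mp: "minimal_period g \<rho>" and L: "0 < L" and per: "\<And>s. g (s + L) = g s"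
  obtains n :: nat where "0 < n" "L = real n * \<rho>"
proof -
  have \<rho>: "\<rho> > 0" using mp unfolding minimal_period_def by blast
  define n where "n = nat \<lfloor>L / \<rho>\<rfloor>"
  have "real n = of_int \<lfloor>L / \<rho>\<rfloor>" unfolding n_def using L \<rho> by simp
  then have n: "real n \<le> L / \<rho>" "L / \<rho> < real n + 1" by linarith+
  define R where "R = L - real n * \<rho>"
  have R: "0 \<le> R" "R < \<rho>" unfolding R_def using n \<rho> by (simp_all add: field_simps)
  have "g (s + R) = g s" for s
    using minimal_period_multiple[OF mp, of "s + R" n] per[of s] by (simp add: R_def)
  with R mp have "R = 0" unfolding minimal_period_def by (metis order_le_less)
  then have "L = real n * \<rho>" unfolding R_def by simp
  moreover from this L have "0 < n" by (cases n) auto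
  ultimately show ?thesis using that by blast
qed

context
  fixes \<gamma> :: "real \<Rightarrow> real^3"
  assumes arc: "arclength_sphere_curve \<gamma>"
begin

lemma curve_has_tangent: "(\<gamma> has_vector_derivative tangent \<gamma> s) (at s)"
  using arc unfolding arclength_sphere_curve_def tangent_def
  using vector_derivative_works by blast

lemma tangent_has_derivative:
  "(tangent \<gamma> has_vector_derivative vector_derivative (tangent \<gamma>) (at s)) (at s)"
  using arc unfolding arclength_sphere_curve_def
  using vector_derivative_works by blast

lemma inner_curve_self: "\<gamma> s \<bullet> \<gamma> s = 1"
  using arc unfolding arclength_sphere_curve_def by (simp add: dot_square_norm)

lemma inner_tangent_self: "tangent \<gamma> s \<bullet> tangent \<gamma> s = 1"
  using arc unfolding arclength_sphere_curve_def by (simp add: dot_square_norm)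

lemma inner_curve_tangent: "\<gamma> s \<bullet> tangent \<gamma> s = 0"
  using inner_constant_derivative[OF inner_curve_self curve_has_tangent curve_has_tangent, where x = s]
  by (simp add: inner_commute)

lemma inner_curve_normal: "\<gamma> s \<bullet> normal \<gamma> s = 0"
  and inner_tangent_normal: "tangent \<gamma> s \<bullet> normal \<gamma> s = 0"
  unfolding normal_def by (simp_all add: dot_cross_self)

lemma inner_normal_self: "normal \<gamma> s \<bullet> normal \<gamma> s = 1"
proof -
  have "(norm (normal \<gamma> s))\<^sup>2 = 1"
    using norm_cross_dot[of "\<gamma> s" "tangent \<gamma> s"] inner_curve_tangent[of s]
    by (simp add: normal_def)
      (metis inner_tangent_self inner_curve_self norm_eq_1 dot_square_norm power2_eq_square mult_1)
  then show ?thesis by (simp add: dot_square_norm)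
qed

lemma inner_tangent_curve: "tangent \<gamma> s \<bullet> \<gamma> s = 0"
  and inner_normal_curve: "normal \<gamma> s \<bullet> \<gamma> s = 0"
  and inner_normal_tangent: "normal \<gamma> s \<bullet> tangent \<gamma> s = 0"
  using inner_curve_tangent inner_curve_normal inner_tangent_normal by (simp_all add: inner_commute)

lemmas orthonormal_frame =
  inner_curve_self inner_tangent_self inner_normal_self
  inner_curve_tangent inner_curve_normal inner_tangent_normal
  inner_tangent_curve inner_normal_curve inner_normal_tangent

lemma tangent_derivative_eq:
  "vector_derivative (tangent \<gamma>) (at s) = - \<gamma> s + geod_curv \<gamma> s *\<^sub>R normal \<gamma> s"
proof -
  let ?A = "vector_derivative (tangent \<gamma>) (at s)"
  have "norm (\<gamma> s) = 1" "norm (tangent \<gamma> s) = 1"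
    using arc unfolding arclength_sphere_curve_def by auto
  from orthonormal_frame_expansion[OF this inner_curve_tangent, where v = ?A, folded normal_def]
  have "?A = (?A \<bullet> \<gamma> s) *\<^sub>R \<gamma> s + (?A \<bullet> tangent \<gamma> s) *\<^sub>R tangent \<gamma> s
      + (?A \<bullet> normal \<gamma> s) *\<^sub>R normal \<gamma> s" .
  also have "?A \<bullet> \<gamma> s = -1"
    using inner_constant_derivative[OF inner_curve_tangent curve_has_tangent tangent_has_derivative, where x = s]
      inner_tangent_self[of s] by (simp add: inner_commute)
  also have "?A \<bullet> tangent \<gamma> s = 0"
    using inner_constant_derivative[OF inner_tangent_self tangent_has_derivative tangent_has_derivative, where x = s]
    by (simp add: inner_commute)
  also have "?A \<bullet> normal \<gamma> s = geod_curv \<gamma> s"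
    unfolding geod_curv_def cov_accel_def by (simp add: inner_diff_left inner_curve_normal)
  finally show ?thesis by simp
qed

lemma normal_has_derivative:
  "(normal \<gamma> has_vector_derivative (- geod_curv \<gamma> s *\<^sub>R tangent \<gamma> s)) (at s)"
proof -
  have "((\<lambda>s. \<gamma> s \<times> tangent \<gamma> s) has_vector_derivative
     (\<gamma> s \<times> vector_derivative (tangent \<gamma>) (at s) + tangent \<gamma> s \<times> tangent \<gamma> s)) (at s)"
    using bounded_bilinear.has_vector_derivative[OF bounded_bilinear_cross3
        curve_has_tangent tangent_has_derivative] .
  moreover have "\<gamma> s \<times> vector_derivative (tangent \<gamma>) (at s) + tangent \<gamma> s \<times> tangent \<gamma> s
      = - geod_curv \<gamma> s *\<^sub>R tangent \<gamma> s"
    unfolding tangent_derivative_eq normal_def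
    using Lagrange[of "\<gamma> s" "\<gamma> s" "tangent \<gamma> s"] inner_curve_tangent[of s] inner_curve_self[of s]
    by (simp add: cross_add_right cross_mult_right Cross3.right_diff_distrib)
  ultimately show ?thesis unfolding normal_def[abs_def] by simp
qed

lemma geod_curv_periodic:
  assumes per: "\<And>s. \<gamma> (s + L) = \<gamma> s"
  shows "geod_curv \<gamma> (s + L) = geod_curv \<gamma> s"
proof -
  have diff: "\<gamma> differentiable (at s)" "tangent \<gamma> differentiable (at s)" for s
    using arc unfolding arclength_sphere_curve_def by auto
  have T: "tangent \<gamma> (s + L) = tangent \<gamma> s" for s
    unfolding tangent_def by (rule vector_derivative_periodic[where f = \<gamma>, OF per diff(1)])
  have "vector_derivative (tangent \<gamma>) (at (s + L)) = vector_derivative (tangent \<gamma>) (at s)"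
    by (rule vector_derivative_periodic[where f = "tangent \<gamma>", OF T diff(2)])
  then show ?thesis unfolding geod_curv_def cov_accel_def normal_def per T by simp
qed

lemma closed_curve_iff_multiple_of_curvature_period:
  assumes mp: "minimal_period (geod_curv \<gamma>) \<rho>"
  shows "closed_curve \<gamma> \<longleftrightarrow> (\<exists>n::nat. 0 < n \<and> (\<forall>s. \<gamma> (s + real n * \<rho>) = \<gamma> s))"
proof
  assume "closed_curve \<gamma>"
  then obtain L where "L > 0" and per: "\<And>s. \<gamma> (s + L) = \<gamma> s"
    unfolding closed_curve_def by blast
  then obtain n :: nat where "0 < n" "L = real n * \<rho>"
    using period_is_multiple_of_minimal_period[OF mp] geod_curv_periodic[OF per] by metis
  then show "\<exists>n::nat. 0 < n \<and> (\<forall>s. \<gamma> (s + real n * \<rho>) = \<gamma> s)" using per by blast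
next
  assume "\<exists>n::nat. 0 < n \<and> (\<forall>s. \<gamma> (s + real n * \<rho>) = \<gamma> s)"
  then obtain n :: nat where "0 < n" "\<forall>s. \<gamma> (s + real n * \<rho>) = \<gamma> s" by blast
  moreover have "\<rho> > 0" using mp unfolding minimal_period_def by blast
  ultimately show "closed_curve \<gamma>"
    unfolding closed_curve_def by (intro exI[of _ "real n * \<rho>"]) auto
qed

end

locale elastic_curve =
  fixes p a :: real and \<gamma> :: "real \<Rightarrow> real^3"
  assumes p_less_1: "p < 1"
    and elastic: "p_elastic p \<gamma>"
    and first_integral: "\<And>s. p\<^sup>2 * (p - 1)\<^sup>2 * geod_curv \<gamma> s powr (2 * (p - 2)) * (deriv (geod_curv \<gamma>) s)\<^sup>2
            + (p - 1)\<^sup>2 * geod_curv \<gamma> s powr (2 * p) + p\<^sup>2 * geod_curv \<gamma> s powr (2 * (p - 1)) = a"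
begin

abbreviation "\<kappa> \<equiv> geod_curv \<gamma>"
abbreviation "T \<equiv> tangent \<gamma>"
abbreviation "N \<equiv> normal \<gamma>"
abbreviation "w \<equiv> \<lambda>t. \<kappa> t powr (p - 1)"
abbreviation "w' \<equiv> deriv w"
abbreviation "w'' \<equiv> deriv w'"

lemma arc: "arclength_sphere_curve \<gamma>"
  and curv_pos: "\<kappa> s > 0"
  and euler_lagrange: "p * w'' s + (p - 1) * \<kappa> s powr (p + 1) + p * \<kappa> s powr (p - 1) = 0"
  using elastic unfolding p_elastic_def by blast+

lemma w_has_derivative: "(w has_real_derivative w' s) (at s)"
  and w'_has_derivative: "(w' has_real_derivative w'' s) (at s)"
  using elastic unfolding p_elastic_def by (simp_all add: DERIV_deriv_iff_real_differentiable)

lemma curv_has_derivative: "(\<kappa> has_real_derivative deriv \<kappa> s) (at s)"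
  using differentiable_if_powr_differentiable[of \<kappa> "p - 1"] curv_pos p_less_1 elastic
  unfolding p_elastic_def by (simp add: DERIV_deriv_iff_real_differentiable)

lemma curv_powr_has_derivative:
  "((\<lambda>t. \<kappa> t powr e) has_real_derivative e * \<kappa> s powr (e - 1) * deriv \<kappa> s) (at s)"
  using DERIV_fun_powr[OF curv_has_derivative curv_pos] by simp

lemma w'_eq: "w' s = (p - 1) * \<kappa> s powr (p - 2) * deriv \<kappa> s"
  using DERIV_unique[OF w_has_derivative curv_powr_has_derivative[of "p - 1"]]
  by (simp add: algebra_simps)

definition "c s = (1 - p) * \<kappa> s powr p"

definition "J s = (p * w s) *\<^sub>R \<gamma> s + (p * w' s) *\<^sub>R T s + c s *\<^sub>R N s"

lemma c_pos: "c s > 0"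
  unfolding c_def using p_less_1 curv_pos[of s] by simp

lemma J_has_derivative_zero: "(J has_vector_derivative 0) (at s)"
proof -
  let ?c' = "(1 - p) * (p * \<kappa> s powr (p - 1) * deriv \<kappa> s)"
  have "(J has_vector_derivative
     ((p * w s) *\<^sub>R T s + (p * w' s) *\<^sub>R \<gamma> s)
     + ((p * w' s) *\<^sub>R vector_derivative T (at s) + (p * w'' s) *\<^sub>R T s)
     + (c s *\<^sub>R (- \<kappa> s *\<^sub>R T s) + ?c' *\<^sub>R N s)) (at s)"
    unfolding J_def[abs_def] c_def[abs_def]
    by (intro has_vector_derivative_add has_vector_derivative_scaleR DERIV_cmult
        w_has_derivative w'_has_derivative curv_powr_has_derivative
        curve_has_tangent[OF arc] tangent_has_derivative[OF arc] normal_has_derivative[OF arc])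
  moreover have "((p * w s) *\<^sub>R T s + (p * w' s) *\<^sub>R \<gamma> s)
     + ((p * w' s) *\<^sub>R vector_derivative T (at s) + (p * w'' s) *\<^sub>R T s)
     + (c s *\<^sub>R (- \<kappa> s *\<^sub>R T s) + ?c' *\<^sub>R N s)
     = (p * w s + p * w'' s - c s * \<kappa> s) *\<^sub>R T s + (p * w' s * \<kappa> s + ?c') *\<^sub>R N s"
    unfolding tangent_derivative_eq[OF arc] by (simp add: algebra_simps)
  moreover have "p * w s + p * w'' s - c s * \<kappa> s = 0"
    using euler_lagrange[of s] curv_pos[of s] unfolding c_def
    by (simp add: powr_add algebra_simps)
  moreover have "p * w' s * \<kappa> s + ?c' = 0"
  proof -
    have "\<kappa> s powr (p - 2) * \<kappa> s = \<kappa> s powr (p - 1)"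
      using curv_pos[of s] powr_add[of "\<kappa> s" "p - 2" 1] by simp
    then have "w' s * \<kappa> s = (p - 1) * deriv \<kappa> s * w s"
      unfolding w'_eq by (simp add: mult_ac)
    then have "p * w' s * \<kappa> s = p * ((p - 1) * deriv \<kappa> s * w s)" by (simp add: mult.assoc)
    then show ?thesis by (simp add: algebra_simps)
  qed
  ultimately show ?thesis by simp
qed

definition "J\<^sub>0 = J 0"

lemma J_eq: "J s = J\<^sub>0"
  unfolding J\<^sub>0_def using has_vector_derivative_zero_imp_constant[OF J_has_derivative_zero] .

lemma inner_J0_curve: "J\<^sub>0 \<bullet> \<gamma> s = p * w s"
  and inner_J0_tangent: "J\<^sub>0 \<bullet> T s = p * w' s"
  and inner_J0_normal: "J\<^sub>0 \<bullet> N s = c s"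
  unfolding J_eq[of s, symmetric] J_def using orthonormal_frame[OF arc]
  by (simp_all add: inner_add_left)

lemma a_eq: "a = (p * w s)\<^sup>2 + (p * w' s)\<^sup>2 + (c s)\<^sup>2"
proof -
  have sq: "\<kappa> s powr (2 * r) = (\<kappa> s powr r)\<^sup>2" for r
    using curv_pos[of s] by (simp add: power2_eq_square powr_add[symmetric])
  have "a = p\<^sup>2 * (p - 1)\<^sup>2 * \<kappa> s powr (2 * (p - 2)) * (deriv \<kappa> s)\<^sup>2
      + (p - 1)\<^sup>2 * \<kappa> s powr (2 * p) + p\<^sup>2 * \<kappa> s powr (2 * (p - 1))"
    using first_integral[of s] by simp
  also have "\<dots> = (p * w s)\<^sup>2 + (p * w' s)\<^sup>2 + (c s)\<^sup>2"
    unfolding w'_eq c_def sq by (simp add: power_mult_distrib power2_eq_square algebra_simps)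
  finally show ?thesis .
qed

lemma inner_J0_self: "J\<^sub>0 \<bullet> J\<^sub>0 = a"
proof -
  have "J\<^sub>0 \<bullet> J\<^sub>0 = J\<^sub>0 \<bullet> J 0" by (simp add: J\<^sub>0_def)
  also have "\<dots> = (p * w 0)\<^sup>2 + (p * w' 0)\<^sup>2 + (c 0)\<^sup>2"
    unfolding J_def
    by (simp add: inner_add_right inner_J0_curve inner_J0_tangent inner_J0_normal power2_eq_square)
  finally show ?thesis using a_eq[of 0] by simp
qed

lemma a_minus_sq_w_pos: "a - (p * w s)\<^sup>2 > 0"
  using a_eq[of s] c_pos[of s] by (smt (verit) zero_le_power2 zero_less_power2)

lemma a_pos: "a > 0"
  using a_minus_sq_w_pos[of 0] by (smt (verit) zero_le_power2)

definition "rot_axis = (1 / sqrt a) *\<^sub>R J\<^sub>0"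

definition "height s = \<gamma> s \<bullet> rot_axis"

definition "radius s = sqrt (1 - (height s)\<^sup>2)"

definition "u s = (1 / radius s) *\<^sub>R (\<gamma> s - height s *\<^sub>R rot_axis)"

definition "u_perp s = rot_axis \<times> u s"

definition "angular_speed s =
  (1 - p) * sqrt a * (\<kappa> s powr (2 - p) / (a * \<kappa> s powr (2 * (1 - p)) - p\<^sup>2))"

lemma inner_rot_axis_self: "rot_axis \<bullet> rot_axis = 1"
  using inner_J0_self a_pos unfolding rot_axis_def by (simp add: power2_eq_square[symmetric])

lemma height_eq: "height s = p * w s / sqrt a"
  unfolding height_def rot_axis_def using inner_J0_curve[of s] by (simp add: inner_commute)

lemma one_minus_height_sq: "1 - (height s)\<^sup>2 = (a - (p * w s)\<^sup>2) / a"
  unfolding height_eq using a_pos by (simp add: field_simps power_divide)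

lemma one_minus_height_sq_pos: "1 - (height s)\<^sup>2 > 0"
  unfolding one_minus_height_sq using a_minus_sq_w_pos a_pos by simp

lemma radius_pos: "radius s > 0"
  unfolding radius_def using one_minus_height_sq_pos by simp

lemma radius_sq: "(radius s)\<^sup>2 = 1 - (height s)\<^sup>2"
  unfolding radius_def using one_minus_height_sq_pos[of s] by simp

lemma curve_cylindrical: "\<gamma> s = radius s *\<^sub>R u s + height s *\<^sub>R rot_axis"
  unfolding u_def using radius_pos[of s] by simp

lemma inner_u_rot_axis: "u s \<bullet> rot_axis = 0" and inner_rot_axis_u: "rot_axis \<bullet> u s = 0"
  unfolding u_def height_def by (simp_all add: inner_diff_left inner_diff_right inner_rot_axis_self inner_commute)

lemma height_has_derivative: "(height has_real_derivative p * w' s / sqrt a) (at s)"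
  unfolding height_eq[abs_def] by (intro DERIV_cdivide DERIV_cmult w_has_derivative)

lemma curve_minus_height: "\<gamma> s - height s *\<^sub>R rot_axis = radius s *\<^sub>R u s"
  unfolding u_def using radius_pos[of s] by simp

lemma inner_u_self: "u s \<bullet> u s = 1"
proof -
  have "(\<gamma> s - height s *\<^sub>R rot_axis) \<bullet> (\<gamma> s - height s *\<^sub>R rot_axis) = (radius s)\<^sup>2"
    unfolding radius_sq using inner_curve_self[OF arc, of s]
    by (simp add: inner_diff_left inner_diff_right inner_rot_axis_self height_def
        inner_commute power2_eq_square)
  then show ?thesis unfolding curve_minus_height using radius_pos[of s]
    by (simp add: power2_eq_square)
qed

lemma inner_tangent_rot_axis: "T s \<bullet> rot_axis = p * w' s / sqrt a"
  unfolding rot_axis_def using inner_J0_tangent[of s] by (simp add: inner_commute)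

lemma inner_tangent_u_perp: "T s \<bullet> u_perp s = c s / (sqrt a * radius s)"
proof -
  have "T s \<bullet> u_perp s = rot_axis \<bullet> (u s \<times> T s)"
    unfolding u_perp_def by (rule triple_product_cyclic)
  also have "u s \<times> T s = (1 / radius s) *\<^sub>R (\<gamma> s \<times> T s - height s *\<^sub>R (rot_axis \<times> T s))"
    unfolding u_def by (simp add: cross_mult_left Cross3.left_diff_distrib)
  also have "rot_axis \<bullet> \<dots> = (1 / radius s) * (rot_axis \<bullet> N s)"
    by (simp add: inner_diff_right dot_cross_self normal_def)
  finally show ?thesis
    using inner_J0_normal[of s] unfolding rot_axis_def by (simp add: inner_commute)
qed

lemma angular_speed_eq: "angular_speed s = c s * sqrt a / (a - (p * w s)\<^sup>2)"
proof -
  define E where "E = \<kappa> s powr (2 * (1 - p))"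
  have "E > 0" unfolding E_def using curv_pos[of s] by simp
  have "\<kappa> s powr (2 - p) = \<kappa> s powr p * E"
    unfolding E_def using curv_pos[of s] by (simp add: powr_add[symmetric] algebra_simps)
  moreover have "(p * w s)\<^sup>2 * E = p\<^sup>2"
    unfolding E_def using curv_pos[of s]
    by (simp add: power_mult_distrib power2_eq_square powr_add[symmetric] algebra_simps)
  then have "a * E - p\<^sup>2 = E * (a - (p * w s)\<^sup>2)" by (simp add: algebra_simps)
  ultimately show ?thesis
    unfolding angular_speed_def c_def E_def[symmetric] using \<open>E > 0\<close> by simp
qed

lemma angular_speed_continuous: "isCont angular_speed s"
proof -
  have "isCont \<kappa> s" using curv_has_derivative DERIV_isCont by blast
  moreover have "isCont w s" using w_has_derivative DERIV_isCont by blast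
  ultimately show ?thesis
    unfolding angular_speed_eq[abs_def] c_def
    using a_minus_sq_w_pos[of s] curv_pos[of s] by (intro continuous_intros) auto
qed

lemma inverse_radius_has_derivative:
  obtains d where "((\<lambda>s. 1 / radius s) has_real_derivative d) (at s)"
proof -
  have "((\<lambda>s. 1 - (height s)\<^sup>2) has_real_derivative - (2 * height s * (p * w' s / sqrt a))) (at s)"
    by (auto intro!: derivative_eq_intros height_has_derivative)
  from DERIV_chain2[OF DERIV_real_sqrt[OF one_minus_height_sq_pos[of s]] this]
  obtain r' where "(radius has_real_derivative r') (at s)"
    unfolding radius_def[abs_def] by blast
  from DERIV_inverse_fun[OF this] radius_pos[of s] show ?thesis
    using that by (simp add: inverse_eq_divide)
qed

lemma u_has_derivative: "(u has_vector_derivative angular_speed s *\<^sub>R u_perp s) (at s)"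
proof -
  obtain d where d: "((\<lambda>s. 1 / radius s) has_real_derivative d) (at s)"
    using inverse_radius_has_derivative .
  let ?h' = "p * w' s / sqrt a"
  let ?D = "(1 / radius s) *\<^sub>R (T s - ?h' *\<^sub>R rot_axis) + d *\<^sub>R (radius s *\<^sub>R u s)"
  have "((\<lambda>s. height s *\<^sub>R rot_axis) has_vector_derivative ?h' *\<^sub>R rot_axis) (at s)"
    using has_vector_derivative_scaleR[OF height_has_derivative has_vector_derivative_const] by simp
  from has_vector_derivative_scaleR[OF d has_vector_derivative_diff[OF curve_has_tangent[OF arc] this]]
  have "(u has_vector_derivative (1 / radius s) *\<^sub>R (T s - ?h' *\<^sub>R rot_axis)
      + d *\<^sub>R (\<gamma> s - height s *\<^sub>R rot_axis)) (at s)"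
    unfolding u_def[abs_def] .
  then have D: "(u has_vector_derivative ?D) (at s)"
    by (simp only: curve_minus_height)
  have "?D = (?D \<bullet> rot_axis) *\<^sub>R rot_axis + (?D \<bullet> u s) *\<^sub>R u s
      + (?D \<bullet> u_perp s) *\<^sub>R u_perp s"
    using orthonormal_frame_expansion[OF _ _ inner_rot_axis_u] inner_rot_axis_self inner_u_self
    unfolding u_perp_def norm_eq_1 by blast
  also have "?D \<bullet> rot_axis = 0"
    by (simp add: inner_add_left inner_diff_left inner_tangent_rot_axis inner_rot_axis_self inner_u_rot_axis)
  also have "?D \<bullet> u s = 0"
    using inner_constant_derivative[OF inner_u_self D D] by (simp add: inner_commute)
  also have "?D \<bullet> u_perp s = c s / (sqrt a * (radius s)\<^sup>2)"
    unfolding u_perp_def using inner_tangent_u_perp[of s, unfolded u_perp_def]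
    by (simp add: inner_add_left inner_diff_left dot_cross_self power2_eq_square)
  also have "\<dots> = c s * (a / sqrt a) / (a - (p * w s)\<^sup>2)"
    unfolding radius_sq one_minus_height_sq using a_pos a_minus_sq_w_pos[of s] by simp
  also have "\<dots> = angular_speed s"
    unfolding angular_speed_eq using a_pos by (simp add: real_div_sqrt)
  finally show ?thesis using D by simp
qed

lemma u_perp_has_derivative: "(u_perp has_vector_derivative - angular_speed s *\<^sub>R u s) (at s)"
proof -
  have "(u_perp has_vector_derivative
      rot_axis \<times> (angular_speed s *\<^sub>R (rot_axis \<times> u s)) + 0 \<times> u s) (at s)"
    unfolding u_perp_def[abs_def]
    using bounded_bilinear.has_vector_derivative[OF bounded_bilinear_cross3
        has_vector_derivative_const[of rot_axis] u_has_derivative[unfolded u_perp_def]] .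
  moreover have "rot_axis \<times> (angular_speed s *\<^sub>R (rot_axis \<times> u s)) + 0 \<times> u s
      = - angular_speed s *\<^sub>R u s"
    using Lagrange[of rot_axis rot_axis "u s"]
    by (simp add: cross_mult_right inner_rot_axis_self inner_rot_axis_u)
  ultimately show ?thesis by simp
qed

definition "polar_angle =
  (SOME \<theta>. \<theta> 0 = 0 \<and> (\<forall>s. (\<theta> has_real_derivative angular_speed s) (at s)))"

lemma polar_angle_0: "polar_angle 0 = 0"
  and polar_angle_has_derivative: "(polar_angle has_real_derivative angular_speed s) (at s)"
proof -
  have "\<exists>\<theta>. \<theta> 0 = 0 \<and> (\<forall>s. (\<theta> has_real_derivative angular_speed s) (at s))"
    using antiderivative_vanishing_at_0[OF angular_speed_continuous] by metis
  from someI_ex[OF this] show "polar_angle 0 = 0" "(polar_angle has_real_derivative angular_speed s) (at s)"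
    unfolding polar_angle_def by blast+
qed

lemma u_rotation: "u s = cos (polar_angle s) *\<^sub>R u 0 + sin (polar_angle s) *\<^sub>R u_perp 0"
  using rotation_from_derivatives[OF u_has_derivative u_perp_has_derivative
      polar_angle_has_derivative polar_angle_0] .

lemma polar_angle_shift:
  assumes "\<And>s. \<kappa> (s + L) = \<kappa> s"
  shows "polar_angle (s + real n * L) = polar_angle s + real n * polar_angle L"
  using antiderivative_shift_periodic[OF polar_angle_has_derivative polar_angle_0]
  by (simp add: angular_speed_def assms)

lemma curve_shift_invariant_iff:
  assumes per: "\<And>s. \<kappa> (s + L) = \<kappa> s"
  shows "(\<forall>s. \<gamma> (s + L) = \<gamma> s) \<longleftrightarrow> (\<exists>k::int. polar_angle L = 2 * pi * k)"
proof -
  have "\<gamma> (s + L) = radius s *\<^sub>R u (s + L) + height s *\<^sub>R rot_axis" for s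
    using curve_cylindrical[of "s + L"] per[of s] by (simp add: radius_def height_eq)
  then have \<gamma>_eq: "\<gamma> (s + L) = \<gamma> s \<longleftrightarrow> u (s + L) = u s" for s
    using curve_cylindrical[of s] radius_pos[of s] by auto
  show ?thesis
  proof
    assume "\<forall>s. \<gamma> (s + L) = \<gamma> s"
    then have "u (0 + L) = u 0" using \<gamma>_eq by blast
    then have "u L \<bullet> u 0 = 1" using inner_u_self[of 0] by simp
    then have "cos (polar_angle L) = 1"
      using u_rotation[of L] inner_u_self[of 0]
      by (simp add: inner_add_left u_perp_def dot_cross_self)
    then obtain k :: int where "polar_angle L = of_int k * 2 * pi" using cos_one_2pi_int by blast
    then show "\<exists>k::int. polar_angle L = 2 * pi * k" by (intro exI[of _ k]) simp
  next
    assume "\<exists>k::int. polar_angle L = 2 * pi * k"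
    then have "sin (polar_angle (s + L)) = sin (polar_angle s) \<and>
        cos (polar_angle (s + L)) = cos (polar_angle s)" for s
      using polar_angle_shift[OF per, of s 1] sin_cos_eq_iff by auto
    then have "u (s + L) = u s" for s
      using u_rotation[of s] u_rotation[of "s + L"] by simp
    then show "\<forall>s. \<gamma> (s + L) = \<gamma> s" using \<gamma>_eq by blast
  qed
qed

lemma closed_curve_iff_polar_angle_rational:
  assumes mp: "minimal_period \<kappa> \<rho>"
  shows "closed_curve \<gamma> \<longleftrightarrow> (\<exists>q\<in>\<rat>. polar_angle \<rho> = 2 * pi * q)"
proof -
  have per: "\<kappa> (s + real n * \<rho>) = \<kappa> s" for s n
    using minimal_period_multiple[OF mp] .
  have "closed_curve \<gamma> \<longleftrightarrow> (\<exists>n::nat. 0 < n \<and> (\<forall>s. \<gamma> (s + real n * \<rho>) = \<gamma> s))"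
    by (rule closed_curve_iff_multiple_of_curvature_period[OF arc mp])
  also have "\<dots> \<longleftrightarrow> (\<exists>n::nat. 0 < n \<and> (\<exists>k::int. real n * polar_angle \<rho> = 2 * pi * k))"
    using curve_shift_invariant_iff[OF per] polar_angle_shift[OF per[of _ 1], of 0]
    by (simp add: polar_angle_0)
  also have "\<dots> \<longleftrightarrow> (\<exists>q\<in>\<rat>. polar_angle \<rho> = 2 * pi * q)"
    by (rule rational_multiple_of_2pi_iff[symmetric])
  finally show ?thesis .
qed

lemma Lambda_p_eq_polar_angle:
  assumes "0 < \<rho>"
  shows "Lambda_p p a \<kappa> \<rho> = polar_angle \<rho>"
proof -
  have "(angular_speed has_integral (polar_angle \<rho> - polar_angle 0)) {0..\<rho>}"
    using assms polar_angle_has_derivative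
    by (intro fundamental_theorem_of_calculus)
      (auto simp: has_real_derivative_iff_has_vector_derivative intro: has_vector_derivative_at_within)
  then show ?thesis
    unfolding Lambda_p_def angular_speed_def[abs_def] polar_angle_0
    by (simp add: integral_unique flip: integral_mult_right)
qed

end

theorem mainTheorem6:
  fixes p a \<rho> :: real and \<gamma> :: "real \<Rightarrow> real^3"
  assumes "0 < p" "p < 1"
    and "a > p powr p * (1 - p) powr (1 - p)"
    and "p_elastic p \<gamma>"
    and "\<not> (\<exists>c. \<forall>s. geod_curv \<gamma> s = c)"
    and "\<forall>s. p\<^sup>2 * (p - 1)\<^sup>2 * geod_curv \<gamma> s powr (2 * (p - 2)) * (deriv (geod_curv \<gamma>) s)\<^sup>2
            + (p - 1)\<^sup>2 * geod_curv \<gamma> s powr (2 * p) + p\<^sup>2 * geod_curv \<gamma> s powr (2 * (p - 1)) = a"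
    and "minimal_period (geod_curv \<gamma>) \<rho>"
  shows "closed_curve \<gamma> \<longleftrightarrow>
         (\<exists>q\<in>\<rat>. Lambda_p p a (geod_curv \<gamma>) \<rho> = 2 * pi * q)"
proof -
  interpret elastic_curve p a \<gamma>
    using assms(2,4,6) by unfold_locales auto
  have "0 < \<rho>" using assms(7) unfolding minimal_period_def by blast
  then show ?thesis
    using closed_curve_iff_polar_angle_rational[OF assms(7)] Lambda_p_eq_polar_angle by simp
qed

end
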